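(* Let $\varphi(\lambda,\mu,a_1,\dots,a_n)$ be a smooth function and let $M$ be an open subset of $\mathbb{R}^{2n}$ with coordinates $(\boldsymbol\lambda,\boldsymbol\mu)=(\lambda_1,\dots,\lambda_n,\mu_1,\dots,\mu_n)$ on which the system $$\varphi(\lambda_i,\mu_i,a_1,\dots,a_n)=0,\qquad i=1,\dots,n,$$ is solved for the parameters by smooth functions $a_k=h_k(\boldsymbol\lambda,\boldsymbol\mu)$, $k=1,\dots,n$, such that the $n\times n$ matrix $\left(\partial\varphi_s/\partial a_r\right)$, where $\varphi_s:=\varphi(\lambda_s,\mu_s,a_1,\dots,a_n)$, is invertible at $a=h(\boldsymbol\lambda,\boldsymbol\mu)$. Let $c(\lambda,\mu)$ be any $C^2$ function and let $$\pi=\sum_{i=1}^n c(\lambda_i,\mu_i)\frac{\partial}{\partial\lambda_i}\wedge\frac{\partial}{\partial\mu_i}.$$ Then $\{h_i,h_j\}_\pi=0$ for all $i,j=1,\dots,n$.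
   Context: The Poisson bracket of $\pi$ is $\{f,g\}_\pi=\sum_{k=1}^n\left(\frac{\partial f}{\partial\lambda_k}\frac{\partial g}{\partial\mu_k}-\frac{\partial f}{\partial\mu_k}\frac{\partial g}{\partial\lambda_k}\right)c(\lambda_k,\mu_k)$. *)

theory Defs
  imports "HOL-Analysis.Analysis"
begin

text \<open>C^k on an open set S: there is a family D of iterated directional
derivatives (D vs x = derivative of f at x in the directions listed in vs)
such that all derivatives up to order k exist (as Frechet derivatives) and
all derivatives of order at most k are continuous on S.\<close>
definition Ck_on :: "nat \<Rightarrow> 'a::real_normed_vector set \<Rightarrow> ('a \<Rightarrow> 'b::real_normed_vector) \<Rightarrow> bool" where
  "Ck_on k S f \<longleftrightarrow> (\<exists>D :: 'a list \<Rightarrow> 'a \<Rightarrow> 'b.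
      (\<forall>x\<in>S. D [] x = f x) \<and>
      (\<forall>vs. length vs < k \<longrightarrow> (\<forall>x\<in>S. (D vs has_derivative (\<lambda>v. D (v # vs) x)) (at x))) \<and>
      (\<forall>vs. length vs \<le> k \<longrightarrow> continuous_on S (D vs)))"

definition smooth_on :: "'a::real_normed_vector set \<Rightarrow> ('a \<Rightarrow> 'b::real_normed_vector) \<Rightarrow> bool" where
  "smooth_on S f \<longleftrightarrow> (\<forall>k. Ck_on k S f)"

definition d_lam :: "('n::finite) \<Rightarrow> ((real^'n) \<times> (real^'n) \<Rightarrow> real) \<Rightarrow> (real^'n) \<times> (real^'n) \<Rightarrow> real" where
  "d_lam k f p = frechet_derivative f (at p) (axis k 1, 0)"

definition d_mu :: "('n::finite) \<Rightarrow> ((real^'n) \<times> (real^'n) \<Rightarrow> real) \<Rightarrow> (real^'n) \<times> (real^'n) \<Rightarrow> real" where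
  "d_mu k f p = frechet_derivative f (at p) (0, axis k 1)"

definition poisson :: "(real \<times> real \<Rightarrow> real) \<Rightarrow> ((real^'n) \<times> (real^'n) \<Rightarrow> real) \<Rightarrow> ((real^'n) \<times> (real^'n) \<Rightarrow> real)
    \<Rightarrow> (real^'n) \<times> (real^'n) \<Rightarrow> real" where
  "poisson c f g p = (\<Sum>k\<in>UNIV.
      (d_lam k f p * d_mu k g p - d_mu k f p * d_lam k g p) * c (fst p $ k, snd p $ k))"

definition param_jacobian :: "(real \<times> real \<times> (real^'n) \<Rightarrow> real) \<Rightarrow> (real^'n) \<times> (real^'n) \<Rightarrow> real^'n \<Rightarrow> real^'n^'n" where
  "param_jacobian \<phi> p a = (\<chi> s r. frechet_derivative \<phi> (at (fst p $ s, snd p $ s, a)) (0, 0, axis r 1))"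

end

theory Submission
  imports Defs
begin

text \<open>Differentiating the constraints \<open>\<phi>(\<lambda>\<^sub>s, \<mu>\<^sub>s, h) = 0\<close> gives
\<open>A \<cdot> dh = -(\<partial>\<phi>\<^sub>s/\<partial>\<lambda>\<^sub>s d\<lambda>\<^sub>s + \<partial>\<phi>\<^sub>s/\<partial>\<mu>\<^sub>s d\<mu>\<^sub>s)\<^sub>s\<close> with \<open>A = (\<partial>\<phi>\<^sub>s/\<partial>a\<^sub>r)\<close>.
Since the right-hand side involves \<open>\<lambda>\<^sub>k, \<mu>\<^sub>k\<close> only in its \<open>k\<close>-th row, the
gradients \<open>\<partial>h/\<partial>\<lambda>\<^sub>k\<close> and \<open>\<partial>h/\<partial>\<mu>\<^sub>k\<close> are both multiples of the \<open>k\<close>-th column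
of \<open>A\<^sup>-\<^sup>1\<close>. Every summand of \<open>{h\<^sub>i, h\<^sub>j}\<^sub>\<pi>\<close> is a \<open>2\<times>2\<close> determinant built
from these two proportional vectors, hence vanishes.\<close>

lemma Ck_on_Suc_has_derivative:
  assumes "Ck_on (Suc k) S f" "open S" "x \<in> S"
  shows "(f has_derivative frechet_derivative f (at x)) (at x)"
proof -
  obtain D where D0: "\<forall>x\<in>S. D [] x = f x"
    and D1: "\<forall>vs. length vs < Suc k \<longrightarrow> (\<forall>x\<in>S. (D vs has_derivative (\<lambda>v. D (v # vs) x)) (at x))"
    using assms(1) unfolding Ck_on_def by blast
  have "(D [] has_derivative (\<lambda>v. D [v] x)) (at x)"
    using D1 assms(3) by auto
  then have "(f has_derivative (\<lambda>v. D [v] x)) (at x)"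
    by (rule has_derivative_transform_within_open[OF _ assms(2,3)]) (use D0 in auto)
  then show ?thesis
    using frechet_derivative_works differentiableI by blast
qed

lemma smooth_on_has_derivative:
  assumes "smooth_on S f" "open S" "x \<in> S"
  shows "(f has_derivative frechet_derivative f (at x)) (at x)"
  using assms Ck_on_Suc_has_derivative[of 0 S f x] unfolding smooth_on_def by blast

lemma has_derivative_zero_if_vanishing_on_open:
  assumes "(f has_derivative f') (at p)" "open M" "p \<in> M" "\<forall>q\<in>M. f q = 0"
  shows "f' = (\<lambda>_. 0)"
proof -
  have "(f has_derivative (\<lambda>_. 0)) (at p)"
    by (rule has_derivative_transform_within_open[OF has_derivative_const assms(2,3)])
       (use assms(4) in auto)
  then show ?thesis
    using assms(1) has_derivative_unique by blast
qed

lemma linear_triple_expansion: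
  fixes L :: "real \<times> real \<times> (real^'n) \<Rightarrow> real"
  assumes "linear L"
  shows "L (a, b, z) = a * L (1, 0, 0) + b * L (0, 1, 0) + (\<Sum>r\<in>UNIV. z $ r * L (0, 0, axis r 1))"
proof -
  have "(\<Sum>r\<in>UNIV. z $ r *\<^sub>R ((0::real), (0::real), axis r (1::real))) = (0, 0, \<Sum>r\<in>UNIV. z $ r *\<^sub>R axis r 1)"
    by (simp add: prod_eq_iff fst_sum snd_sum)
  also have "(\<Sum>r\<in>UNIV. z $ r *\<^sub>R axis r 1) = z"
    using basis_expansion[of z] by (simp add: scalar_mult_eq_scaleR)
  finally have "(a, b, z) = a *\<^sub>R (1, 0, 0) + b *\<^sub>R (0, 1, 0) + (\<Sum>r\<in>UNIV. z $ r *\<^sub>R (0, 0, axis r 1))"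
    by simp
  then have "L (a, b, z) = L (a *\<^sub>R (1, 0, 0)) + L (b *\<^sub>R (0, 1, 0)) + (\<Sum>r\<in>UNIV. L (z $ r *\<^sub>R (0, 0, axis r 1)))"
    by (simp only: linear_add[OF assms] linear_sum[OF assms])
  then show ?thesis
    by (simp only: linear_scale[OF assms] real_scaleR_def)
qed

lemma d_lam_vec_nth:
  assumes "(h has_derivative H') (at p)"
  shows "d_lam k (\<lambda>q. h q $ i) p = H' (axis k 1, 0) $ i"
proof -
  have "((\<lambda>q. h q $ i) has_derivative (\<lambda>v. H' v $ i)) (at p)"
    using bounded_linear.has_derivative[OF bounded_linear_vec_nth assms] by simp
  then show ?thesis
    unfolding d_lam_def using frechet_derivative_at by metis
qed

lemma d_mu_vec_nth:
  assumes "(h has_derivative H') (at p)"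
  shows "d_mu k (\<lambda>q. h q $ i) p = H' (0, axis k 1) $ i"
proof -
  have "((\<lambda>q. h q $ i) has_derivative (\<lambda>v. H' v $ i)) (at p)"
    using bounded_linear.has_derivative[OF bounded_linear_vec_nth assms] by simp
  then show ?thesis
    unfolding d_mu_def using frechet_derivative_at by metis
qed

lemma poisson_eq_0_if_gradients_proportional:
  assumes "\<And>k. \<exists>\<alpha> \<beta> (w :: real^'n). \<forall>i.
      d_lam k (\<lambda>q. h q $ i) p = \<alpha> * w $ i \<and> d_mu k (\<lambda>q. h q $ i) p = \<beta> * w $ i"
  shows "poisson c (\<lambda>q. h q $ i) (\<lambda>q. h q $ j) p = 0"
proof -
  have "d_lam k (\<lambda>q. h q $ i) p * d_mu k (\<lambda>q. h q $ j) p
        - d_mu k (\<lambda>q. h q $ i) p * d_lam k (\<lambda>q. h q $ j) p = 0" for k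
    using assms[of k] by (auto simp: algebra_simps)
  then show ?thesis
    unfolding poisson_def by simp
qed

lemma implicit_constraint_linearized:
  fixes \<phi> :: "real \<times> real \<times> (real^'n) \<Rightarrow> real"
    and h :: "(real^'n) \<times> (real^'n) \<Rightarrow> real^'n"
  assumes hd: "(h has_derivative H') (at p)"
    and pd: "\<And>s. (\<phi> has_derivative P s) (at (fst p $ s, snd p $ s, h p))"
    and "open M" "p \<in> M"
    and solves: "\<forall>q\<in>M. \<forall>s. \<phi> (fst q $ s, snd q $ s, h q) = 0"
  shows "(\<chi> s r. P s (0, 0, axis r 1)) *v H' v
           = - (\<chi> s. fst v $ s * P s (1, 0, 0) + snd v $ s * P s (0, 1, 0))"
proof -
  have vanishes: "P s (fst v $ s, snd v $ s, H' v) = 0" for s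
  proof -
    have "((\<lambda>q. (fst q $ s, snd q $ s, h q)) has_derivative (\<lambda>v. (fst v $ s, snd v $ s, H' v))) (at p)"
      by (intro has_derivative_Pair hd bounded_linear.has_derivative[OF bounded_linear_vec_nth]
          has_derivative_fst has_derivative_snd has_derivative_ident)
    then have "((\<phi> \<circ> (\<lambda>q. (fst q $ s, snd q $ s, h q)))
                  has_derivative (P s \<circ> (\<lambda>v. (fst v $ s, snd v $ s, H' v)))) (at p)"
      by (rule diff_chain_at) (simp add: pd)
    then have "P s \<circ> (\<lambda>v. (fst v $ s, snd v $ s, H' v)) = (\<lambda>_. 0)"
      by (rule has_derivative_zero_if_vanishing_on_open[OF _ assms(3,4)]) (use solves in simp)
    from fun_cong[OF this, of v] show ?thesis
      by simp
  qed
  have expansion: "P s (fst v $ s, snd v $ s, H' v) = fst v $ s * P s (1, 0, 0) + snd v $ s * P s (0, 1, 0)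
      + (\<Sum>r\<in>UNIV. H' v $ r * P s (0, 0, axis r 1))" for s
    using pd[of s] by (intro linear_triple_expansion has_derivative_linear)
  show ?thesis
  proof (rule vec_eq_iff[THEN iffD2, rule_format])
    fix s
    have "(\<Sum>r\<in>UNIV. H' v $ r * P s (0, 0, axis r 1))
        = - (fst v $ s * P s (1, 0, 0) + snd v $ s * P s (0, 1, 0))"
      using vanishes[of s] expansion[of s] by linarith
    then show "((\<chi> s r. P s (0, 0, axis r 1)) *v H' v) $ s
        = (- (\<chi> s. fst v $ s * P s (1, 0, 0) + snd v $ s * P s (0, 1, 0))) $ s"
      by (simp add: matrix_vector_mult_def mult.commute)
  qed
qed

lemma implicit_partials_proportional:
  fixes \<phi> :: "real \<times> real \<times> (real^'n) \<Rightarrow> real"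
    and h :: "(real^'n) \<times> (real^'n) \<Rightarrow> real^'n"
  assumes hd: "(h has_derivative H') (at p)"
    and pd: "\<And>s. (\<phi> has_derivative P s) (at (fst p $ s, snd p $ s, h p))"
    and "open M" "p \<in> M"
    and "\<forall>q\<in>M. \<forall>s. \<phi> (fst q $ s, snd q $ s, h q) = 0"
    and inverse: "B ** (\<chi> s r. P s (0, 0, axis r 1)) = mat 1"
  shows "H' (axis k 1, 0) = (- P k (1, 0, 0)) *\<^sub>R (B *v axis k 1)"
    and "H' (0, axis k 1) = (- P k (0, 1, 0)) *\<^sub>R (B *v axis k 1)"
proof -
  have solved: "H' v = B *v - (\<chi> s. fst v $ s * P s (1, 0, 0) + snd v $ s * P s (0, 1, 0))" for v
    using arg_cong[OF implicit_constraint_linearized[OF assms(1-5)], of "(*v) B"]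
    by (simp add: matrix_vector_mul_assoc inverse)
  have lam_rhs: "(\<chi> s. fst (axis k 1, 0::real^'n) $ s * P s (1, 0, 0) + snd (axis k 1, 0::real^'n) $ s * P s (0, 1, 0))
      = P k (1, 0, 0) *\<^sub>R axis k 1"
    by (simp add: vec_eq_iff axis_def)
  have mu_rhs: "(\<chi> s. fst (0::real^'n, axis k 1) $ s * P s (1, 0, 0) + snd (0::real^'n, axis k 1) $ s * P s (0, 1, 0))
      = P k (0, 1, 0) *\<^sub>R axis k 1"
    by (simp add: vec_eq_iff axis_def)
  show "H' (axis k 1, 0) = (- P k (1, 0, 0)) *\<^sub>R (B *v axis k 1)"
    unfolding solved lam_rhs by (simp only: matrix_vector_mult_scaleR flip: scaleR_minus_left)
  show "H' (0, axis k 1) = (- P k (0, 1, 0)) *\<^sub>R (B *v axis k 1)"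
    unfolding solved mu_rhs by (simp only: matrix_vector_mult_scaleR flip: scaleR_minus_left)
qed

theorem theorem4:
  fixes \<phi> :: "real \<times> real \<times> (real^'n) \<Rightarrow> real"
    and M :: "((real^'n) \<times> (real^'n)) set"
    and h :: "(real^'n) \<times> (real^'n) \<Rightarrow> real^'n"
    and c :: "real \<times> real \<Rightarrow> real"
  assumes phi_smooth: "smooth_on UNIV \<phi>"
    and M_open: "open M"
    and h_smooth: "smooth_on M h"
    and h_solves: "\<forall>p\<in>M. \<forall>i. \<phi> (fst p $ i, snd p $ i, h p) = 0"
    and jac_inv: "\<forall>p\<in>M. invertible (param_jacobian \<phi> p (h p))"
    and c_C2: "Ck_on 2 UNIV c"
  shows "\<forall>p\<in>M. \<forall>i j. poisson c (\<lambda>q. h q $ i) (\<lambda>q. h q $ j) p = 0"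
  \<comment> \<open>\<open>c\<close> enters the bracket only as a pointwise weight.\<close>
proof (intro ballI allI)
  fix p i j
  assume pM: "p \<in> M"
  define P where "P s = frechet_derivative \<phi> (at (fst p $ s, snd p $ s, h p))" for s
  have hd: "(h has_derivative frechet_derivative h (at p)) (at p)"
    by (rule smooth_on_has_derivative[OF h_smooth M_open pM])
  have pd: "(\<phi> has_derivative P s) (at (fst p $ s, snd p $ s, h p))" for s
    unfolding P_def by (rule smooth_on_has_derivative[OF phi_smooth]) auto
  obtain B where "B ** (\<chi> s r. P s (0, 0, axis r 1)) = mat 1"
    using jac_inv pM unfolding invertible_def param_jacobian_def P_def by blast
  note proportional = implicit_partials_proportional[OF hd pd M_open pM h_solves this]
  show "poisson c (\<lambda>q. h q $ i) (\<lambda>q. h q $ j) p = 0"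
  proof (rule poisson_eq_0_if_gradients_proportional)
    fix k
    show "\<exists>\<alpha> \<beta> (w :: real^'n). \<forall>i.
        d_lam k (\<lambda>q. h q $ i) p = \<alpha> * w $ i \<and> d_mu k (\<lambda>q. h q $ i) p = \<beta> * w $ i"
      by (intro exI[of _ "- P k (1, 0, 0)"] exI[of _ "- P k (0, 1, 0)"] exI[of _ "B *v axis k 1"])
         (simp add: d_lam_vec_nth[OF hd] d_mu_vec_nth[OF hd] proportional)
  qed
qed

end
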